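(* Let $b\ge2$, $d\ge1$ be integers, $\ell\in\mathbb{N}_0$ and $0<\epsilon<b^{-\ell}$. For every $L\in\mathbb{N}$ there exists $q_d\in\mathcal{NN}_{d,1}(2d\,b^{\lceil\ell/L\rceil},L)$ such that for every ${\bf i}\in I_\ell$, \[ q_d(x)=\mathrm{ind}({\bf i}):=\sum_{j=1}^d b^{\ell(j-1)}{\bf i}_j\qquad\text{for all } x\in\Omega^\ell_{{\bf i},\epsilon}. \]
   Context: $\mathcal{NN}_{d,k}(W,L)$: set of maps $g:\mathbb{R}^d\to\mathbb{R}^k$ given by $g_0(x)=x$, $g_{\ell+1}(x)=\sigma(A_\ell g_\ell(x)+b_\ell)$ ($\ell=0,\dots,L-1$), $g(x)=A_Lg_L(x)+b_L$, with $A_\ell\in\mathbb{R}^{N_{\ell+1}\times N_\ell}$, $b_\ell\in\mathbb{R}^{N_{\ell+1}}$, $N_0=d$, $N_{L+1}=k$, $\max\{N_1,\dots,N_L\}\le W$, $\sigma(t)=\max\{t,0\}$ componentwise. Partition with base $b$: for $\ell\in\mathbb{N}_0$, $I_\ell=\{0,\dots,b^\ell-1\}^d$. For ${\bf i}\in I_\ell$ and $\epsilon>0$, $\Omega^\ell_{{\bf i},\epsilon}=\prod_{j=1}^dJ_j$ where $J_j=[b^{-\ell}{\bf i}_j,\,b^{-\ell}({\bf i}_j+1)-\epsilon)$ if ${\bf i}_j<b^\ell-1$ and $J_j=[1-b^{-\ell},1)$ if ${\bf i}_j=b^\ell-1$. *)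

theory Defs
  imports Complex_Main
begin

text \<open>Vectors in R^n are represented as functions nat => real, only the coordinates
  0..n-1 being relevant. A network of depth L is given by widths N 0,...,N (L+1),
  weight matrices A l (N (l+1) x N l) and biases bb l.\<close>

definition relu :: "real \<Rightarrow> real" where
  "relu t = max t 0"

fun nn_hidden :: "(nat \<Rightarrow> nat) \<Rightarrow> (nat \<Rightarrow> nat \<Rightarrow> nat \<Rightarrow> real) \<Rightarrow> (nat \<Rightarrow> nat \<Rightarrow> real)
    \<Rightarrow> nat \<Rightarrow> (nat \<Rightarrow> real) \<Rightarrow> (nat \<Rightarrow> real)" where
  "nn_hidden N A bb 0 x = x"
| "nn_hidden N A bb (Suc l) x =
     (\<lambda>i. relu (bb l i + (\<Sum>j<N l. A l i j * nn_hidden N A bb l x j)))"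

definition nn_eval :: "(nat \<Rightarrow> nat) \<Rightarrow> (nat \<Rightarrow> nat \<Rightarrow> nat \<Rightarrow> real) \<Rightarrow> (nat \<Rightarrow> nat \<Rightarrow> real)
    \<Rightarrow> nat \<Rightarrow> (nat \<Rightarrow> real) \<Rightarrow> (nat \<Rightarrow> real)" where
  "nn_eval N A bb L x = (\<lambda>i. bb L i + (\<Sum>j<N L. A L i j * nn_hidden N A bb L x j))"

definition is_NN :: "nat \<Rightarrow> nat \<Rightarrow> nat \<Rightarrow> nat \<Rightarrow> ((nat \<Rightarrow> real) \<Rightarrow> (nat \<Rightarrow> real)) \<Rightarrow> bool" where
  "is_NN d k W L g \<longleftrightarrow>
     (\<exists>N A bb. N 0 = d \<and> N (Suc L) = k \<and> (\<forall>l\<in>{1..L}. N l \<le> W) \<and>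
        (\<forall>x. \<forall>i<k. g x i = nn_eval N A bb L x i))"

text \<open>Multi-indices i in I_l (0-based coordinates j < d).\<close>
definition index_set :: "nat \<Rightarrow> nat \<Rightarrow> nat \<Rightarrow> (nat \<Rightarrow> nat) set" where
  "index_set b d l = {i. \<forall>j<d. i j < b ^ l}"

definition Omega :: "nat \<Rightarrow> nat \<Rightarrow> nat \<Rightarrow> (nat \<Rightarrow> nat) \<Rightarrow> real \<Rightarrow> (nat \<Rightarrow> real) set" where
  "Omega b d l i eps = {x. \<forall>j<d. x j \<in>
     (if i j < b ^ l - 1
      then {real (i j) / real b ^ l ..< real (i j + 1) / real b ^ l - eps}
      else {1 - 1 / real b ^ l ..< 1})}"

definition ind :: "nat \<Rightarrow> nat \<Rightarrow> nat \<Rightarrow> (nat \<Rightarrow> nat) \<Rightarrow> real" where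
  "ind b d l i = (\<Sum>j<d. real b ^ (l * j) * real (i j))"

end

theory Submission
  imports Defs
begin

text \<open>A ReLU network cannot compute the floor function, but it can on points kept away from
  the integers from the left: if \<open>z \<ge> k\<close> or \<open>z \<le> k - \<delta>\<close>, the step \<open>[k \<le> z]\<close> equals the ramp
  \<open>(relu (z - k + \<delta>) - relu (z - k)) / \<delta>\<close>, so \<open>\<lfloor>z\<rfloor>\<close> is a sum of \<open>m - 1\<close> ramps when \<open>0 \<le> z < m\<close>.
  Every coordinate \<open>y\<close> of a point of the cell \<open>\<Omega>\<close> with index \<open>i\<close> is separated in this sense from
  the grid \<open>{j / b^l}\<close>, and \<open>i\<close> is recovered as \<open>\<lfloor>b^l y\<rfloor>\<close>. With \<open>s = \<lceil>l / L\<rceil>\<close>, layer \<open>t\<close> passes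
  from \<open>\<lfloor>b^(s(t-1)) y\<rfloor>\<close> to \<open>\<lfloor>b^(st) y\<rfloor>\<close> (exponents capped at \<open>l\<close>) by adding the floor of a remainder
  below \<open>b^s\<close>, which costs \<open>2 b^s\<close> units per coordinate; the output layer then combines the \<open>d\<close>
  cell indices linearly.\<close>

lemma sum_nat_blocks:
  fixes f :: "nat \<Rightarrow> 'a::comm_monoid_add"
  shows "(\<Sum>p<d * M. f p) = (\<Sum>q<d. \<Sum>r<M. f (q * M + r))"
proof -
  have "(\<Sum>p<d * M. f p) = (\<Sum>q<d. sum f {q * M..<q * M + M})"
    using sum.nat_group[of f M d] by simp
  also have "\<dots> = (\<Sum>q<d. \<Sum>r<M. f (q * M + r))"
    using sum.shift_bounds_nat_ivl[of f 0 "q * M" M for q]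
    by (simp add: lessThan_atLeast0 add.commute)
  finally show ?thesis .
qed

lemma sum_nat_blocks_select:
  fixes c :: "nat \<Rightarrow> 'a::semiring_0"
  assumes "q0 < d"
  shows "(\<Sum>p<d * M. (if p div M = q0 then c (p mod M) else 0) * h p) = (\<Sum>r<M. c r * h (q0 * M + r))"
proof -
  have "(\<Sum>r<M. (if (q * M + r) div M = q0 then c ((q * M + r) mod M) else 0) * h (q * M + r))
      = (if q = q0 then \<Sum>r<M. c r * h (q0 * M + r) else 0)" for q
    by (auto intro!: sum.cong)
  then show ?thesis
    using assms by (simp add: sum_nat_blocks)
qed

lemma sum_nat_pairs:
  fixes g :: "nat \<Rightarrow> 'a::comm_monoid_add"
  shows "(\<Sum>r<2 * m. g r) = (\<Sum>k<m. g (2 * k) + g (2 * k + 1))"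
  by (induction m) (simp_all add: sum.distrib ac_simps)

lemma le_nat_ceiling_divide_mult:
  fixes l L :: nat
  assumes "0 < L"
  shows "l \<le> nat \<lceil>real l / real L\<rceil> * L"
proof -
  have "real l / real L \<le> real (nat \<lceil>real l / real L\<rceil>)"
    by linarith
  then have "real l \<le> real (nat \<lceil>real l / real L\<rceil>) * real L"
    using assms by (simp only: pos_divide_le_eq of_nat_0_less_iff)
  then show ?thesis
    by (metis of_nat_le_iff of_nat_mult)
qed

lemma relu_ramp_difference:
  assumes "0 < \<delta>" and "0 \<le> w \<or> w \<le> - \<delta>"
  shows "(relu (w + \<delta>) - relu w) / \<delta> = (if 0 \<le> w then 1 else 0)"
  using assms by (auto simp: relu_def)

lemma floor_eq_sum_relu_ramps:
  fixes z \<delta> :: real and m :: nat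
  assumes "0 < \<delta>" and "0 \<le> z" and "z < real m"
    and separated: "\<And>k. k \<in> {1..<m} \<Longrightarrow> real k \<le> z \<or> z \<le> real k - \<delta>"
  shows "(\<Sum>k\<in>{1..<m}. (relu (z - real k + \<delta>) - relu (z - real k)) / \<delta>) = of_int \<lfloor>z\<rfloor>"
proof -
  have "(relu (z - real k + \<delta>) - relu (z - real k)) / \<delta> = (if real k \<le> z then 1 else 0)"
    if "k \<in> {1..<m}" for k
    using relu_ramp_difference[OF \<open>0 < \<delta>\<close>, of "z - real k"] separated[OF that] by auto
  then have "(\<Sum>k\<in>{1..<m}. (relu (z - real k + \<delta>) - relu (z - real k)) / \<delta>)
      = (\<Sum>k\<in>{1..<m}. if real k \<le> z then 1 else 0)"
    by (rule sum.cong[OF refl])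
  also have "\<dots> = (\<Sum>k\<in>{1..nat \<lfloor>z\<rfloor>}. 1)"
  proof -
    have "k \<le> nat \<lfloor>z\<rfloor> \<longleftrightarrow> real k \<le> z" for k
      using assms(2) by (simp add: le_nat_iff le_floor_iff)
    then show ?thesis
      using assms(3) by (intro sum.mono_neutral_cong_right) auto
  qed
  also have "\<dots> = of_int \<lfloor>z\<rfloor>"
    using assms(2) by simp
  finally show ?thesis .
qed

lemma floor_mult_nat_decompose:
  fixes u :: real and m :: nat
  assumes "0 < m"
  defines "z \<equiv> real m * u - real m * of_int \<lfloor>u\<rfloor>"
  shows "0 \<le> z" and "z < real m" and "\<lfloor>real m * u\<rfloor> = int m * \<lfloor>u\<rfloor> + \<lfloor>z\<rfloor>"
proof -
  have "real m * of_int \<lfloor>u\<rfloor> \<le> real m * u"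
    by (simp add: mult_left_mono)
  moreover have "real m * u < real m * (of_int \<lfloor>u\<rfloor> + 1)"
    using assms(1) by (intro mult_strict_left_mono) linarith+
  ultimately show "0 \<le> z" "z < real m"
    unfolding z_def by (simp_all add: algebra_simps)
  have "real m * u = z + of_int (int m * \<lfloor>u\<rfloor>)"
    unfolding z_def by simp
  then show "\<lfloor>real m * u\<rfloor> = int m * \<lfloor>u\<rfloor> + \<lfloor>z\<rfloor>"
    by (metis floor_add_int add.commute)
qed

definition grid_separated :: "nat \<Rightarrow> real \<Rightarrow> real \<Rightarrow> bool" where
  "grid_separated n eps y \<longleftrightarrow> (\<forall>j<n. real j / real n \<le> y \<or> y \<le> real j / real n - eps)"

lemma grid_separated_coarsen:
  assumes "grid_separated (P * Q) eps y" and "0 < Q" and "j < P"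
  shows "real j / real P \<le> y \<or> y \<le> real j / real P - eps"
proof -
  have "j * Q < P * Q" using assms(2,3) by simp
  moreover have "real (j * Q) / real (P * Q) = real j / real P"
    using assms(2) by simp
  ultimately show ?thesis
    using assms(1) unfolding grid_separated_def by metis
qed

lemma grid_separated_cell:
  assumes "real i / real n \<le> x" and "i + 1 < n \<Longrightarrow> x \<le> real (i + 1) / real n - eps"
  shows "grid_separated n eps x"
  unfolding grid_separated_def
proof (intro allI impI)
  fix j assume "j < n"
  show "real j / real n \<le> x \<or> x \<le> real j / real n - eps"
  proof (cases "j \<le> i")
    case True
    then have "real j / real n \<le> real i / real n"
      by (simp add: divide_right_mono)
    with assms(1) show ?thesis by simp
  next
    case False
    then have "real (i + 1) / real n \<le> real j / real n"
      by (simp add: divide_right_mono)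
    with assms(2) False \<open>j < n\<close> show ?thesis by simp
  qed
qed

lemma floor_cell:
  assumes "0 < n" and "real i / real n \<le> x" and "x < real (i + 1) / real n"
  shows "\<lfloor>real n * x\<rfloor> = int i"
  using assms by (simp add: floor_eq_iff field_simps)

lemma Omega_coordinate:
  assumes "1 \<le> b" and "0 < eps" and "i \<in> index_set b d l" and "x \<in> Omega b d l i eps" and "q < d"
  shows "0 \<le> x q" and "x q < 1" and "grid_separated (b ^ l) eps (x q)"
    and "\<lfloor>real (b ^ l) * x q\<rfloor> = int (i q)"
proof -
  define n where "n = b ^ l"
  have n_pos: "0 < n" using assms(1) unfolding n_def by simp
  have "i q < n" using assms(3,5) unfolding index_set_def n_def by simp
  have x_mem: "x q \<in> (if i q + 1 < n then {real (i q) / real n ..< real (i q + 1) / real n - eps}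
      else {1 - 1 / real n ..< 1})"
    using assms(4,5) unfolding Omega_def n_def by (auto simp: less_diff_conv)
  have inner: "x q \<le> real (i q + 1) / real n - eps" if "i q + 1 < n"
    using x_mem that by simp
  have cell: "real (i q) / real n \<le> x q \<and> x q < real (i q + 1) / real n"
  proof (cases "i q + 1 < n")
    case True
    then show ?thesis
      using x_mem assms(2) by auto
  next
    case False
    then have "real (i q) / real n = 1 - 1 / real n" and "real (i q + 1) / real n = 1"
      using \<open>i q < n\<close> n_pos by (simp_all add: of_nat_diff field_simps)
    then show ?thesis
      using x_mem False by auto
  qed
  then have lower: "real (i q) / real n \<le> x q" and upper: "x q < real (i q + 1) / real n"
    by auto
  have "0 \<le> real (i q) / real n" and "real (i q + 1) / real n \<le> 1"
    using \<open>i q < n\<close> by simp_all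
  then show "0 \<le> x q" and "x q < 1"
    using lower upper by linarith+
  show "grid_separated (b ^ l) eps (x q)"
    using grid_separated_cell[OF lower inner] unfolding n_def .
  show "\<lfloor>real (b ^ l) * x q\<rfloor> = int (i q)"
    using floor_cell[OF n_pos lower upper] unfolding n_def .
qed

locale digit_extraction =
  fixes b l s :: nat and eps :: real
  assumes base: "2 \<le> b" and eps_pos: "0 < eps"
begin

text \<open>\<open>res t\<close> is the resolution reached after \<open>t\<close> hidden layers; each layer refines it by
  the factor \<open>ratio t \<le> b\<^sup>s\<close>.\<close>

definition res :: "nat \<Rightarrow> nat" where
  "res t = b ^ min l (s * t)"

definition ratio :: "nat \<Rightarrow> nat" where
  "ratio t = b ^ (min l (s * t) - min l (s * (t - 1)))"

lemma res_pos: "0 < res t"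
  using base by (simp add: res_def)

lemma res_0: "res 0 = 1"
  by (simp add: res_def)

lemma res_full: "l \<le> s * t \<Longrightarrow> res t = b ^ l"
  by (simp add: res_def)

lemma res_mult_cofactor: "res t * b ^ (l - min l (s * t)) = b ^ l"
  by (simp add: res_def flip: power_add)

lemma res_eq_ratio_mult: "1 \<le> t \<Longrightarrow> res t = ratio t * res (t - 1)"
proof -
  assume "1 \<le> t"
  then have "min l (s * (t - 1)) \<le> min l (s * t)"
    by (simp add: min.coboundedI1 min_le_iff_disj)
  then show ?thesis
    unfolding res_def ratio_def by (simp flip: power_add)
qed

lemma ratio_pos: "0 < ratio t"
  using base by (simp add: ratio_def)

lemma ratio_le: "1 \<le> t \<Longrightarrow> ratio t \<le> b ^ s"
proof -
  assume "1 \<le> t"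
  then have "s * t = s * (t - 1) + s"
    by (cases t) auto
  then have "min l (s * t) - min l (s * (t - 1)) \<le> s"
    by simp
  then show ?thesis
    unfolding ratio_def using base by (intro power_increasing) auto
qed

definition admissible :: "real \<Rightarrow> bool" where
  "admissible y \<longleftrightarrow> 0 \<le> y \<and> y < 1 \<and> grid_separated (b ^ l) eps y"

definition remainder :: "nat \<Rightarrow> real \<Rightarrow> real" where
  "remainder t y = real (res t) * y - real (ratio t) * of_int \<lfloor>real (res (t - 1)) * y\<rfloor>"

lemma
  assumes "1 \<le> t"
  shows remainder_nonneg: "0 \<le> remainder t y"
    and remainder_less_ratio: "remainder t y < real (ratio t)"
    and floor_res_eq: "\<lfloor>real (res t) * y\<rfloor> = int (ratio t) * \<lfloor>real (res (t - 1)) * y\<rfloor> + \<lfloor>remainder t y\<rfloor>"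
proof -
  have res_y: "real (res t) * y = real (ratio t) * (real (res (t - 1)) * y)"
    using res_eq_ratio_mult[OF assms] by simp
  show "0 \<le> remainder t y" "remainder t y < real (ratio t)"
    "\<lfloor>real (res t) * y\<rfloor> = int (ratio t) * \<lfloor>real (res (t - 1)) * y\<rfloor> + \<lfloor>remainder t y\<rfloor>"
    unfolding remainder_def res_y
    using floor_mult_nat_decompose[OF ratio_pos[of t], where u = "real (res (t - 1)) * y"] by simp_all
qed

lemma remainder_separated:
  assumes "admissible y" and "1 \<le> t" and "k < ratio t"
  shows "real k \<le> remainder t y \<or> remainder t y \<le> real k - eps * real (res t)"
proof -
  define F where "F = \<lfloor>real (res (t - 1)) * y\<rfloor>"
  define j where "j = ratio t * nat F + k"
  define a where "a = y - real j / real (res t)"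
  have y: "0 \<le> y" "y < 1" "grid_separated (res t * b ^ (l - min l (s * t))) eps y"
    using assms(1) unfolding admissible_def res_mult_cofactor by auto
  have "0 \<le> F" unfolding F_def using y by simp
  moreover have "F < int (res (t - 1))"
    unfolding F_def using y res_pos[of "t - 1"] by (simp add: floor_less_iff)
  ultimately have "int (ratio t) * F + int k < int (ratio t) * (F + 1)"
    using assms(3) by (simp add: algebra_simps)
  also have "\<dots> \<le> int (res t)"
    using \<open>F < int (res (t - 1))\<close> res_eq_ratio_mult[OF assms(2)] by (simp add: mult_left_mono)
  finally have "j < res t"
    unfolding j_def using \<open>0 \<le> F\<close> by (metis of_nat_add of_nat_mult int_nat_eq of_nat_less_iff)
  then have "real j / real (res t) \<le> y \<or> y \<le> real j / real (res t) - eps"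
    using base by (intro grid_separated_coarsen[OF y(3)]) simp_all
  then have "0 \<le> a \<or> a \<le> - eps"
    unfolding a_def by linarith
  moreover have "remainder t y - real k = real (res t) * a"
    unfolding remainder_def a_def j_def F_def[symmetric]
    using \<open>0 \<le> F\<close> res_pos[of t] by (simp add: right_diff_distrib)
  moreover have "real (res t) * a \<le> - eps * real (res t)" if "a \<le> - eps"
    using mult_left_mono[OF that, of "real (res t)"] by (simp add: mult.commute)
  moreover have "0 \<le> real (res t) * a" if "0 \<le> a"
    using that by simp
  ultimately show ?thesis
    by argo
qed

text \<open>The block of a coordinate \<open>y\<close> in hidden layer \<open>t\<close>: unit 0 copies \<open>y\<close>, unit 1 holds
  \<open>\<lfloor>res (t - 1) * y\<rfloor>\<close>, and units \<open>2k\<close>, \<open>2k + 1\<close> are the two ramps at \<open>k\<close> of the remainder.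
  Units with \<open>k \<ge> ratio t\<close> are computed but get readout weight 0.\<close>

definition input_weight :: "nat \<Rightarrow> nat \<Rightarrow> real" where
  "input_weight t r = (if r = 0 then 1 else if r = 1 then 0 else real (res t))"

definition floor_weight :: "nat \<Rightarrow> nat \<Rightarrow> real" where
  "floor_weight t r = (if r = 0 then 0 else if r = 1 then 1 else - real (ratio t))"

definition unit_bias :: "nat \<Rightarrow> nat \<Rightarrow> real" where
  "unit_bias t r = (if r \<le> 1 then 0 else - real (r div 2) + (if even r then eps * real (res t) else 0))"

definition unit_value :: "nat \<Rightarrow> real \<Rightarrow> nat \<Rightarrow> real" where
  "unit_value t y r = relu (input_weight t r * y
     + floor_weight t r * of_int \<lfloor>real (res (t - 1)) * y\<rfloor> + unit_bias t r)"

definition readout :: "nat \<Rightarrow> nat \<Rightarrow> real" where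
  "readout t r = (if r = 1 then real (ratio t)
     else if 2 \<le> r \<and> r div 2 < ratio t then (if even r then 1 else - 1) / (eps * real (res t))
     else 0)"

lemma unit_value_0: "0 \<le> y \<Longrightarrow> unit_value t y 0 = y"
  by (simp add: unit_value_def input_weight_def floor_weight_def unit_bias_def relu_def)

lemma unit_value_1: "0 \<le> y \<Longrightarrow> unit_value t y 1 = of_int \<lfloor>real (res (t - 1)) * y\<rfloor>"
  by (simp add: unit_value_def input_weight_def floor_weight_def unit_bias_def relu_def)

lemma unit_value_ramps:
  assumes "1 \<le> k"
  shows "unit_value t y (2 * k) = relu (remainder t y - real k + eps * real (res t))"
    and "unit_value t y (2 * k + 1) = relu (remainder t y - real k)"
  using assms
  by (simp_all add: unit_value_def input_weight_def floor_weight_def unit_bias_def remainder_def algebra_simps)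

lemma sum_readout_unit_value:
  assumes "admissible y" and "1 \<le> t" and "ratio t \<le> m"
  shows "(\<Sum>r<2 * m. readout t r * unit_value t y r) = of_int \<lfloor>real (res t) * y\<rfloor>"
proof -
  define \<delta> where "\<delta> = eps * real (res t)"
  define F where "F = real (ratio t) * of_int \<lfloor>real (res (t - 1)) * y\<rfloor>"
  define ramp where "ramp k = (relu (remainder t y - real k + \<delta>) - relu (remainder t y - real k)) / \<delta>"
    for k :: nat
  have "0 \<le> y" using assms(1) unfolding admissible_def by simp
  have "0 < m" using ratio_pos[of t] assms(3) by linarith
  have pair: "readout t (2 * k) * unit_value t y (2 * k) + readout t (2 * k + 1) * unit_value t y (2 * k + 1)
      = (if k = 0 then F else if k < ratio t then ramp k else 0)" for k
    using unit_value_1[OF \<open>0 \<le> y\<close>, unfolded One_nat_def] unit_value_ramps[of k t y]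
    by (auto simp: readout_def F_def ramp_def \<delta>_def diff_divide_distrib)
  have "(\<Sum>r<2 * m. readout t r * unit_value t y r) = (\<Sum>k<m. if k = 0 then F else if k < ratio t then ramp k else 0)"
    by (simp only: sum_nat_pairs pair)
  also have "\<dots> = F + (\<Sum>k\<in>{1..<m}. if k < ratio t then ramp k else 0)"
    using \<open>0 < m\<close> by (simp add: lessThan_atLeast0 sum.atLeast_Suc_lessThan)
  also have "\<dots> = F + (\<Sum>k\<in>{1..<ratio t}. ramp k)"
    using assms(3) by (intro arg_cong2[where f = "(+)"] refl sum.mono_neutral_cong_right) auto
  also have "(\<Sum>k\<in>{1..<ratio t}. ramp k) = of_int \<lfloor>remainder t y\<rfloor>"
    unfolding ramp_def
    using remainder_separated[OF assms(1,2)] remainder_nonneg[OF assms(2)] remainder_less_ratio[OF assms(2)]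
      eps_pos res_pos[of t]
    by (intro floor_eq_sum_relu_ramps) (simp_all add: \<delta>_def)
  finally show ?thesis
    unfolding F_def floor_res_eq[OF assms(2)] by simp
qed

text \<open>Hidden layer \<open>t\<close> consists of \<open>d\<close> blocks of \<open>block\<close> units, one per coordinate; the next
  layer reads \<open>y\<close> and, through \<open>readout t\<close>, the refined floor from each block. The first layer needs
  no floor input because \<open>\<lfloor>res 0 * y\<rfloor> = 0\<close>.\<close>

definition block :: nat where
  "block = 2 * b ^ s"

definition width :: "nat \<Rightarrow> nat \<Rightarrow> nat \<Rightarrow> nat" where
  "width d L k = (if k = 0 then d else if k \<le> L then d * block else 1)"

definition weight :: "nat \<Rightarrow> nat \<Rightarrow> nat \<Rightarrow> nat \<Rightarrow> real" where
  "weight L k i p =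
     (if k = 0 then (if p = i div block then input_weight 1 (i mod block) else 0)
      else if k < L then
        (if p div block = i div block
         then input_weight (Suc k) (i mod block) * (if p mod block = 0 then 1 else 0)
           + floor_weight (Suc k) (i mod block) * readout k (p mod block)
         else 0)
      else real b ^ (l * (p div block)) * readout L (p mod block))"

definition bias :: "nat \<Rightarrow> nat \<Rightarrow> nat \<Rightarrow> real" where
  "bias L k i = (if k < L then unit_bias (Suc k) (i mod block) else 0)"

lemma block_pos: "0 < block"
  using base by (simp add: block_def)

lemma weight_first_layer:
  "r < block \<Longrightarrow> weight L 0 (q * block + r) p = (if p = q then input_weight 1 r else 0)"
  by (simp add: weight_def)

lemma weight_output_layer:
  "0 < L \<Longrightarrow> weight L L i p = real b ^ (l * (p div block)) * readout L (p mod block)"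
  by (simp add: weight_def)

lemma weight_hidden_layer:
  "0 < k \<Longrightarrow> k < L \<Longrightarrow> r < block \<Longrightarrow> weight L k (q * block + r) p =
    (if p div block = q then input_weight (Suc k) r * (if p mod block = 0 then 1 else 0)
       + floor_weight (Suc k) r * readout k (p mod block) else 0)"
  by (simp add: weight_def)

lemma bias_block: "k < L \<Longrightarrow> r < block \<Longrightarrow> bias L k (q * block + r) = unit_bias (Suc k) r"
  by (simp add: bias_def)

lemma nn_hidden_first_layer:
  assumes "admissible (x q)" and "1 \<le> L" and "q < d" and "r < block"
  shows "nn_hidden (width d L) (weight L) (bias L) 1 x (q * block + r) = unit_value 1 (x q) r"
proof -
  have "\<lfloor>real (res 0) * x q\<rfloor> = 0"
    using assms(1) by (simp add: admissible_def res_0 floor_eq_iff)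
  moreover have "(\<Sum>p<d. weight L 0 (q * block + r) p * x p) = (\<Sum>p<d. if p = q then input_weight 1 r * x q else 0)"
    using \<open>r < block\<close> by (intro sum.cong) (simp_all add: weight_first_layer)
  moreover have "bias L 0 (q * block + r) = unit_bias 1 r"
    using assms(2,4) by (simp add: bias_block)
  ultimately show ?thesis
    using assms(3) by (simp add: width_def unit_value_def ac_simps)
qed

lemma nn_hidden_unit_value:
  assumes x: "\<And>q. q < d \<Longrightarrow> admissible (x q)"
  shows "1 \<le> t \<Longrightarrow> t \<le> L \<Longrightarrow> q < d \<Longrightarrow> r < block \<Longrightarrow>
    nn_hidden (width d L) (weight L) (bias L) t x (q * block + r) = unit_value t (x q) r"
proof (induction t arbitrary: q r rule: dec_induct)
  case base
  then show ?case using nn_hidden_first_layer[OF x] by simp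
next
  case (step t)
  let ?h = "nn_hidden (width d L) (weight L) (bias L) t x"
  let ?c = "\<lambda>r'. input_weight (Suc t) r * (if r' = 0 then 1 else 0) + floor_weight (Suc t) r * readout t r'"
  have "t < L" "0 \<le> x q" using step x[OF \<open>q < d\<close>] by (auto simp: admissible_def)
  have "(\<Sum>p<width d L t. weight L t (q * block + r) p * ?h p)
      = (\<Sum>p<d * block. (if p div block = q then ?c (p mod block) else 0) * ?h p)"
    using step \<open>t < L\<close> by (simp add: width_def weight_hidden_layer)
  also have "\<dots> = (\<Sum>r'<block. ?c r' * ?h (q * block + r'))"
    by (rule sum_nat_blocks_select[OF \<open>q < d\<close>])
  also have "\<dots> = (\<Sum>r'<block. ?c r' * unit_value t (x q) r')"
    using step.IH[OF _ \<open>q < d\<close>] \<open>t < L\<close> by simp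
  also have "\<dots> = (\<Sum>r'<block. (if r' = 0 then input_weight (Suc t) r * unit_value t (x q) 0 else 0)
      + floor_weight (Suc t) r * (readout t r' * unit_value t (x q) r'))"
    by (intro sum.cong) (auto simp: algebra_simps)
  also have "\<dots> = input_weight (Suc t) r * unit_value t (x q) 0
      + floor_weight (Suc t) r * (\<Sum>r'<2 * b ^ s. readout t r' * unit_value t (x q) r')"
    using block_pos by (simp add: sum.distrib sum_distrib_left flip: block_def)
  also have "\<dots> = input_weight (Suc t) r * x q + floor_weight (Suc t) r * of_int \<lfloor>real (res t) * x q\<rfloor>"
    using unit_value_0[OF \<open>0 \<le> x q\<close>] sum_readout_unit_value[OF x[OF \<open>q < d\<close>] step(1) ratio_le[OF step(1)]]
    by simp
  finally have preactivation: "(\<Sum>p<width d L t. weight L t (q * block + r) p * ?h p) = \<dots>" .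
  show ?case
    unfolding nn_hidden.simps(2) preactivation unit_value_def bias_block[OF \<open>t < L\<close> \<open>r < block\<close>]
    by (simp add: ac_simps)
qed

lemma nn_eval_digits:
  assumes x: "\<And>q. q < d \<Longrightarrow> admissible (x q)" and "1 \<le> L" and "l \<le> s * L"
  shows "nn_eval (width d L) (weight L) (bias L) L x 0 = (\<Sum>q<d. real b ^ (l * q) * of_int \<lfloor>real (b ^ l) * x q\<rfloor>)"
proof -
  let ?h = "nn_hidden (width d L) (weight L) (bias L) L x"
  have "nn_eval (width d L) (weight L) (bias L) L x 0
      = (\<Sum>p<d * block. real b ^ (l * (p div block)) * readout L (p mod block) * ?h p)"
    using \<open>1 \<le> L\<close> by (simp add: nn_eval_def width_def bias_def weight_output_layer)
  also have "\<dots> = (\<Sum>q<d. \<Sum>r<block. real b ^ (l * q) * readout L r * ?h (q * block + r))"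
    using block_pos by (simp add: sum_nat_blocks)
  also have "\<dots> = (\<Sum>q<d. real b ^ (l * q) * (\<Sum>r<2 * b ^ s. readout L r * unit_value L (x q) r))"
    using nn_hidden_unit_value[OF x \<open>1 \<le> L\<close> order.refl]
    by (intro sum.cong refl) (simp add: sum_distrib_left mult.assoc block_def)
  also have "\<dots> = (\<Sum>q<d. real b ^ (l * q) * of_int \<lfloor>real (b ^ l) * x q\<rfloor>)"
    using sum_readout_unit_value[OF x \<open>1 \<le> L\<close> ratio_le[OF \<open>1 \<le> L\<close>]] res_full[OF \<open>l \<le> s * L\<close>]
    by simp
  finally show ?thesis .
qed

end

theorem mainTheorem6:
  fixes b d l L :: nat and eps :: real
  assumes "b \<ge> 2" and "d \<ge> 1" and "0 < eps" and "eps < 1 / real b ^ l" and "L \<ge> 1"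
  shows "\<exists>q. is_NN d 1 (2 * d * b ^ nat \<lceil>real l / real L\<rceil>) L q \<and>
           (\<forall>i\<in>index_set b d l. \<forall>x\<in>Omega b d l i eps. q x 0 = ind b d l i)"
proof -
  define s where "s = nat \<lceil>real l / real L\<rceil>"
  interpret digit_extraction b l s eps
    using assms by unfold_locales auto
  have "l \<le> s * L"
    unfolding s_def using assms(5) by (intro le_nat_ceiling_divide_mult) simp
  let ?q = "nn_eval (width d L) (weight L) (bias L) L"
  have "is_NN d 1 (2 * d * b ^ s) L ?q"
    unfolding is_NN_def by (intro exI[of _ "width d L"] exI[of _ "weight L"] exI[of _ "bias L"])
      (auto simp: width_def block_def)
  moreover have "?q x 0 = ind b d l i" if "i \<in> index_set b d l" and "x \<in> Omega b d l i eps" for i x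
  proof -
    note coordinate = Omega_coordinate[OF _ assms(3) that]
    have "\<And>q. q < d \<Longrightarrow> admissible (x q)"
      using coordinate assms(1) by (simp add: admissible_def)
    then show ?thesis
      using nn_eval_digits[OF _ assms(5) \<open>l \<le> s * L\<close>] coordinate(4) assms(1)
      by (simp add: ind_def)
  qed
  ultimately show ?thesis
    unfolding s_def by blast
qed

end
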